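(* For discrete models over $K$ timesteps, assuming that $\theta^\star_{Tt}>0$ and $\theta^\star_{Ct}>0$ for all $t$, the solution $(\theta_{T}^\star, \theta_{C}^\star)$ is the only stationary point of the multi-player inverse-weighted Brier score game for times $t \in \{1,\ldots,K-1\}$. This game has $2(K-1)$ players: for each $t \in \{1,\ldots,K-1\}$, the $t$-th failure player controls only $\theta_{Tt}$ and minimizes $\ell_F^t(\theta)$, and the $t$-th censor player controls only $\theta_{Ct}$ and minimizes $\ell_G^t(\theta)$. Here $$\ell_{F}^t(\theta)=\mathbb{E}\Big[\frac{\overline{F}_{\theta_T}(t)^2\,\Delta\,\mathbb{1}\{U \leq t\}}{\overline{G}_{\theta_C}(U^{-})}+\frac{F_{\theta_T}(t)^2\,\mathbb{1}\{U > t\}}{\overline{G}_{\theta_C}(t)}\Big],$$ $$\ell_{G}^t(\theta)=\mathbb{E}\Big[\frac{\overline{G}_{\theta_C}(t)^2\,(1-\Delta)\,\mathbb{1}\{U \leq t\}}{\overline{F}_{\theta_T}(U)}+\frac{G_{\theta_C}(t)^2\,\mathbb{1}\{U > t\}}{\overline{F}_{\theta_T}(t)}\Big].$$ A stationary point is a $(\theta_T,\theta_C)$ at which $\partial \ell_F^t/\partial \theta_{Tt}=0$ and $\partial \ell_G^t/\partial \theta_{Ct}=0$ for all $t \in \{1,\ldots,K-1\}$.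
   Context: Let $T$ be a failure time and $C$ a censoring time, both taking values in discrete times $\{1,\ldots,K\}$, with $T$ independent of $C$ (marginal models, no covariates). One observes $U=\min(T,C)$ and $\Delta=\mathbb{1}\{T \leq C\}$; expectations are over the true data-generating distribution of $(T,C)$. The failure model has parameters $\theta_T=(\theta_{T1},\ldots,\theta_{T(K-1)})$ with $\theta_{Tt}=P_\theta(T=t)$, $\theta_{TK}=1-\sum_{t<K}\theta_{Tt}$, CDF $F_{\theta_T}(t)=\sum_{k=1}^t \theta_{Tk}$ and survival function $\overline{F}_{\theta_T}=1-F_{\theta_T}$; likewise the censoring model has $\theta_{Ct}=P_\theta(C=t)$, CDF $G_{\theta_C}$, $\overline{G}_{\theta_C}=1-G_{\theta_C}$, and $\overline{G}_{\theta_C}(t^-)=P_\theta(C\geq t)$. $\theta^\star_T,\theta^\star_C$ denote the parameters of the true failure and censoring distributions. The losses are inverse-probability-of-censoring-weighted Brier scores at time $t$ where the true weighting distribution is replaced by the other player's model. *)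

theory Defs
  imports "HOL-Analysis.Analysis"
begin

text \<open>Discrete model on times 1..K, parametrised by the first K-1 probabilities
  th 1, ..., th (K-1); the mass at K is 1 minus their sum.  Only the values of
  th on 1..K-1 are used.\<close>

definition dpmf :: "nat \<Rightarrow> (nat \<Rightarrow> real) \<Rightarrow> nat \<Rightarrow> real" where
  "dpmf K th k = (if k < K then th k else 1 - (\<Sum>j=1..K-1. th j))"

definition dcdf :: "nat \<Rightarrow> (nat \<Rightarrow> real) \<Rightarrow> nat \<Rightarrow> real" where
  "dcdf K th t = (\<Sum>k=1..t. dpmf K th k)"

definition dsurv :: "nat \<Rightarrow> (nat \<Rightarrow> real) \<Rightarrow> nat \<Rightarrow> real" where
  "dsurv K th t = 1 - dcdf K th t"

text \<open>Left limit of the survival function:  P(C >= u) = 1 - G(u - 1).\<close>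
definition dsurv_minus :: "nat \<Rightarrow> (nat \<Rightarrow> real) \<Rightarrow> nat \<Rightarrow> real" where
  "dsurv_minus K th u = 1 - dcdf K th (u - 1)"

definition valid_param :: "nat \<Rightarrow> (nat \<Rightarrow> real) \<Rightarrow> bool" where
  "valid_param K th \<longleftrightarrow> (\<forall>k\<in>{1..K}. dpmf K th k > 0)"

text \<open>Expectation of h(U, Delta) under the true independent T ~ thsT, C ~ thsC,
  where U = min T C and Delta = [T <= C].\<close>
definition expect_obs ::
  "nat \<Rightarrow> (nat \<Rightarrow> real) \<Rightarrow> (nat \<Rightarrow> real) \<Rightarrow> (nat \<Rightarrow> bool \<Rightarrow> real) \<Rightarrow> real" where
  "expect_obs K thsT thsC h =
     (\<Sum>i=1..K. \<Sum>j=1..K. dpmf K thsT i * dpmf K thsC j * h (min i j) (i \<le> j))"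

definition ind :: "bool \<Rightarrow> real" where
  "ind b = (if b then 1 else 0)"

definition lossF ::
  "nat \<Rightarrow> (nat \<Rightarrow> real) \<Rightarrow> (nat \<Rightarrow> real) \<Rightarrow> nat \<Rightarrow> (nat \<Rightarrow> real) \<Rightarrow> (nat \<Rightarrow> real) \<Rightarrow> real" where
  "lossF K thsT thsC t thT thC =
     expect_obs K thsT thsC (\<lambda>U D.
        (dsurv K thT t)^2 * ind D * ind (U \<le> t) / dsurv_minus K thC U
      + (dcdf K thT t)^2 * ind (U > t) / dsurv K thC t)"

definition lossG ::
  "nat \<Rightarrow> (nat \<Rightarrow> real) \<Rightarrow> (nat \<Rightarrow> real) \<Rightarrow> nat \<Rightarrow> (nat \<Rightarrow> real) \<Rightarrow> (nat \<Rightarrow> real) \<Rightarrow> real" where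
  "lossG K thsT thsC t thT thC =
     expect_obs K thsT thsC (\<lambda>U D.
        (dsurv K thC t)^2 * (1 - ind D) * ind (U \<le> t) / dsurv K thT U
      + (dcdf K thC t)^2 * ind (U > t) / dsurv K thT t)"

definition stationary ::
  "nat \<Rightarrow> (nat \<Rightarrow> real) \<Rightarrow> (nat \<Rightarrow> real) \<Rightarrow> (nat \<Rightarrow> real) \<Rightarrow> (nat \<Rightarrow> real) \<Rightarrow> bool" where
  "stationary K thsT thsC thT thC \<longleftrightarrow>
     (\<forall>t\<in>{1..K-1}.
        ((\<lambda>x. lossF K thsT thsC t (thT(t := x)) thC) has_real_derivative 0) (at (thT t))
      \<and> ((\<lambda>x. lossG K thsT thsC t thT (thC(t := x))) has_real_derivative 0) (at (thC t)))"

end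

theory Submission
  imports Defs
begin

(*
  Each loss is quadratic in the coordinate its player controls. With F and S = 1 - F the model
  CDF and survival function at t, the t-th failure loss is S(t)^2 A + F(t)^2 B, where A and B do
  not depend on the failure model and theta_Tt moves only F(t); so stationarity means
  S(t) A = F(t) B, and likewise for the censoring player. At the truth the IPCW weights are
  exact, A = F*(t) and B = S*(t), so the truth is stationary.

  Conversely, induct on t. If both model CDFs agree with the truth before t, the weights in the
  failure coefficient are exact up to t and those in the censoring coefficient up to t - 1, and
  the two stationarity equations at t become a system in S_T(t) and S_C(t). Eliminating S_T(t)
  leaves a quadratic in S_C(t) with nonnegative leading coefficient and negative constant term,
  whose only positive root is the true value.
*)

lemma sum_dpmf_eq_1:
  assumes "1 \<le> K"
  shows "(\<Sum>k=1..K. dpmf K th k) = 1"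
proof -
  obtain m where K: "K = Suc m" using assms by (cases K) auto
  have "(\<Sum>k=1..m. dpmf K th k) = (\<Sum>k=1..m. th k)"
    using K by (intro sum.cong) (auto simp: dpmf_def)
  then show ?thesis using K by (simp add: dpmf_def)
qed

lemma sum_dpmf_greater_eq_dsurv:
  assumes "1 \<le> K" "t \<le> K"
  shows "(\<Sum>k=1..K. dpmf K th k * ind (t < k)) = dsurv K th t"
proof -
  have "{k\<in>{1..K}. t < k} = {t+1..K}" by auto
  then have "(\<Sum>k=1..K. dpmf K th k * ind (t < k)) = (\<Sum>k=t+1..K. dpmf K th k)"
    by (simp add: ind_def sum.inter_filter[symmetric] if_distrib cong: if_cong)
  also have "\<dots> = (\<Sum>k=1..K. dpmf K th k) - dcdf K th t"
    using sum.ub_add_nat[of 1 t "dpmf K th" "K - t"] assms by (simp add: dcdf_def)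
  finally show ?thesis using sum_dpmf_eq_1[OF assms(1)] by (simp add: dsurv_def)
qed

lemma sum_dpmf_atLeast_eq_dsurv_minus:
  assumes "1 \<le> u" "u \<le> K"
  shows "(\<Sum>k=1..K. dpmf K th k * ind (u \<le> k)) = dsurv_minus K th u"
proof -
  have "u - 1 < k \<longleftrightarrow> u \<le> k" for k using assms(1) by linarith
  then show ?thesis
    using sum_dpmf_greater_eq_dsurv[of K "u - 1" th] assms by (simp add: dsurv_minus_def dsurv_def)
qed

lemma dsurv_pos:
  assumes "valid_param K th" "t < K"
  shows "0 < dsurv K th t"
proof -
  have "0 < (\<Sum>k=1..K. dpmf K th k * ind (t < k))"
    using assms by (intro sum_pos2[of _ K]) (auto simp: valid_param_def ind_def less_imp_le)
  then show ?thesis using sum_dpmf_greater_eq_dsurv[of K t th] assms by simp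
qed

lemma dsurv_minus_pos:
  assumes "valid_param K th" "1 \<le> u" "u \<le> K"
  shows "0 < dsurv_minus K th u"
  using dsurv_pos[of K th "u - 1"] assms by (simp add: dsurv_minus_def dsurv_def)

lemma dcdf_nonneg:
  assumes "valid_param K th" "t \<le> K"
  shows "0 \<le> dcdf K th t"
  using assms unfolding dcdf_def valid_param_def by (intro sum_nonneg) (simp add: less_imp_le)

lemma dcdf_eq_sum_param:
  assumes "t < K"
  shows "dcdf K th t = (\<Sum>k=1..t. th k)"
  using assms unfolding dcdf_def by (intro sum.cong) (auto simp: dpmf_def)

lemma dcdf_fun_upd:
  assumes "1 \<le> t" "t < K"
  shows "dcdf K (th(t := x)) t = dcdf K th t - th t + x"
proof -
  obtain m where t: "t = Suc m" using assms by (cases t) auto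
  have "(\<Sum>k=1..m. (th(t := x)) k) = (\<Sum>k=1..m. th k)"
    using t by (intro sum.cong) auto
  then show ?thesis using assms t by (simp add: dcdf_eq_sum_param)
qed

lemma dcdf_eq_dcdf_pred_plus_dpmf:
  assumes "1 \<le> t"
  shows "dcdf K th t = dcdf K th (t - 1) + dpmf K th t"
  using assms by (cases t) (auto simp: dcdf_def)

lemma param_eq_if_dcdf_eq:
  assumes "1 \<le> t" "t < K"
    and "dcdf K th t = dcdf K th' t" "dcdf K th (t - 1) = dcdf K th' (t - 1)"
  shows "th t = th' t"
  using assms dcdf_eq_dcdf_pred_plus_dpmf[OF assms(1), of K] by (simp add: dpmf_def)

lemma sum_ind_le_eq_sum_atMost:
  fixes t K :: nat
  assumes "t \<le> K"
  shows "(\<Sum>u=1..K. ind (u \<le> t) * f u) = (\<Sum>u=1..t. f u :: real)"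
proof -
  have "(\<Sum>u=1..K. ind (u \<le> t) * f u) = (\<Sum>u=1..K. if u \<le> t then f u else 0)"
    by (intro sum.cong) (auto simp: ind_def)
  also have "\<dots> = sum f {u\<in>{1..K}. u \<le> t}"
    by (rule sum.inter_filter[symmetric]) simp
  also have "{u\<in>{1..K}. u \<le> t} = {1..t}"
    using assms by auto
  finally show ?thesis .
qed

lemma expect_obs_eq_sum:
  assumes "1 \<le> K"
  shows "expect_obs K a b h =
    (\<Sum>u=1..K. dpmf K a u * dsurv_minus K b u * h u True + dpmf K b u * dsurv K a u * h u False)"
proof -
  have "expect_obs K a b h =
      (\<Sum>i=1..K. \<Sum>j=1..K. dpmf K a i * (dpmf K b j * ind (i \<le> j)) * h i True)
    + (\<Sum>i=1..K. \<Sum>j=1..K. dpmf K b j * (dpmf K a i * ind (j < i)) * h j False)"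
    unfolding expect_obs_def sum.distrib[symmetric]
    by (intro sum.cong refl) (auto simp: ind_def min_def)
  also have "\<dots> =
      (\<Sum>i=1..K. dpmf K a i * (\<Sum>j=1..K. dpmf K b j * ind (i \<le> j)) * h i True)
    + (\<Sum>j=1..K. dpmf K b j * (\<Sum>i=1..K. dpmf K a i * ind (j < i)) * h j False)"
    by (subst (2) sum.swap) (simp add: sum_distrib_left sum_distrib_right)
  also have "\<dots> =
      (\<Sum>u=1..K. dpmf K a u * dsurv_minus K b u * h u True)
    + (\<Sum>u=1..K. dpmf K b u * dsurv K a u * h u False)"
    using assms sum_dpmf_atLeast_eq_dsurv_minus[of _ K b] sum_dpmf_greater_eq_dsurv[of K _ a]
    by (intro arg_cong2[where f="(+)"] sum.cong refl) auto
  finally show ?thesis by (simp add: sum.distrib)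
qed

lemma expect_obs_add:
  "expect_obs K a b (\<lambda>U D. f U D + g U D) = expect_obs K a b f + expect_obs K a b g"
  unfolding expect_obs_def by (simp add: distrib_left sum.distrib)

lemma expect_obs_at_risk:
  assumes "1 \<le> K" "t \<le> K"
  shows "expect_obs K a b (\<lambda>U D. ind (t < U) * c) = c * dsurv K a t * dsurv K b t"
proof -
  have "expect_obs K a b (\<lambda>U D. ind (t < U) * c) =
      (\<Sum>i=1..K. \<Sum>j=1..K. c * (dpmf K a i * ind (t < i) * (dpmf K b j * ind (t < j))))"
    unfolding expect_obs_def by (intro sum.cong refl) (simp add: ind_def)
  also have "\<dots> =
      c * ((\<Sum>i=1..K. dpmf K a i * ind (t < i)) * (\<Sum>j=1..K. dpmf K b j * ind (t < j)))"
    unfolding sum_product by (simp add: sum_distrib_left)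
  finally show ?thesis unfolding sum_dpmf_greater_eq_dsurv[OF assms] by simp
qed

definition lossF_event_coeff ::
  "nat \<Rightarrow> (nat \<Rightarrow> real) \<Rightarrow> (nat \<Rightarrow> real) \<Rightarrow> nat \<Rightarrow> (nat \<Rightarrow> real) \<Rightarrow> real" where
  "lossF_event_coeff K a b t thC = (\<Sum>u=1..t. dpmf K a u * dsurv_minus K b u / dsurv_minus K thC u)"

definition lossG_event_coeff ::
  "nat \<Rightarrow> (nat \<Rightarrow> real) \<Rightarrow> (nat \<Rightarrow> real) \<Rightarrow> nat \<Rightarrow> (nat \<Rightarrow> real) \<Rightarrow> real" where
  "lossG_event_coeff K a b t thT = (\<Sum>u=1..t. dpmf K b u * dsurv K a u / dsurv K thT u)"

definition at_risk_coeff ::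
  "nat \<Rightarrow> (nat \<Rightarrow> real) \<Rightarrow> (nat \<Rightarrow> real) \<Rightarrow> nat \<Rightarrow> (nat \<Rightarrow> real) \<Rightarrow> real" where
  "at_risk_coeff K a b t th = dsurv K a t * dsurv K b t / dsurv K th t"

lemma lossF_eq_quadratic:
  assumes "1 \<le> K" "t \<le> K"
  shows "lossF K a b t thT thC =
    (dsurv K thT t)^2 * lossF_event_coeff K a b t thC + (dcdf K thT t)^2 * at_risk_coeff K a b t thC"
proof -
  have event: "expect_obs K a b (\<lambda>U D. (dsurv K thT t)^2 * ind D * ind (U \<le> t) / dsurv_minus K thC U)
      = (dsurv K thT t)^2 * lossF_event_coeff K a b t thC"
    unfolding expect_obs_eq_sum[OF assms(1)] lossF_event_coeff_def sum_distrib_left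
      sum_ind_le_eq_sum_atMost[OF assms(2), symmetric]
    by (intro sum.cong refl) (simp add: ind_def)
  have at_risk: "expect_obs K a b (\<lambda>U D. (dcdf K thT t)^2 * ind (U > t) / dsurv K thC t)
      = (dcdf K thT t)^2 * at_risk_coeff K a b t thC"
    using expect_obs_at_risk[OF assms, of a b "(dcdf K thT t)^2 / dsurv K thC t"]
    by (simp add: at_risk_coeff_def mult.commute)
  show ?thesis
    unfolding lossF_def expect_obs_add event at_risk ..
qed

lemma lossG_eq_quadratic:
  assumes "1 \<le> K" "t \<le> K"
  shows "lossG K a b t thT thC =
    (dsurv K thC t)^2 * lossG_event_coeff K a b t thT + (dcdf K thC t)^2 * at_risk_coeff K a b t thT"
proof -
  have event: "expect_obs K a b (\<lambda>U D. (dsurv K thC t)^2 * (1 - ind D) * ind (U \<le> t) / dsurv K thT U)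
      = (dsurv K thC t)^2 * lossG_event_coeff K a b t thT"
    unfolding expect_obs_eq_sum[OF assms(1)] lossG_event_coeff_def sum_distrib_left
      sum_ind_le_eq_sum_atMost[OF assms(2), symmetric]
    by (intro sum.cong refl) (simp add: ind_def)
  have at_risk: "expect_obs K a b (\<lambda>U D. (dcdf K thC t)^2 * ind (U > t) / dsurv K thT t)
      = (dcdf K thC t)^2 * at_risk_coeff K a b t thT"
    using expect_obs_at_risk[OF assms, of a b "(dcdf K thC t)^2 / dsurv K thT t"]
    by (simp add: at_risk_coeff_def mult.commute)
  show ?thesis
    unfolding lossG_def expect_obs_add event at_risk ..
qed

lemma quadratic_in_dcdf_deriv_zero_iff:
  assumes "1 \<le> t" "t < K"
  shows "((\<lambda>x. (dsurv K (th(t := x)) t)^2 * A + (dcdf K (th(t := x)) t)^2 * B)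
            has_real_derivative 0) (at (th t))
    \<longleftrightarrow> dsurv K th t * A = dcdf K th t * B"
proof -
  define c where "c = dcdf K th t - th t"
  have "(\<lambda>x. (dsurv K (th(t := x)) t)^2 * A + (dcdf K (th(t := x)) t)^2 * B)
      = (\<lambda>x. (1 - (c + x))^2 * A + (c + x)^2 * B)"
    using assms by (simp add: fun_eq_iff dsurv_def dcdf_fun_upd c_def)
  moreover have "((\<lambda>x. (1 - (c + x))^2 * A + (c + x)^2 * B)
      has_real_derivative 2 * (dcdf K th t * B - dsurv K th t * A)) (at (th t))"
    by (auto intro!: derivative_eq_intros simp: c_def dsurv_def algebra_simps)
  ultimately show ?thesis
    using DERIV_unique by fastforce
qed

lemma stationary_iff:
  assumes "1 \<le> K"
  shows "stationary K a b thT thC \<longleftrightarrow> (\<forall>t\<in>{1..K-1}.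
      dsurv K thT t * lossF_event_coeff K a b t thC = dcdf K thT t * at_risk_coeff K a b t thC
    \<and> dsurv K thC t * lossG_event_coeff K a b t thT = dcdf K thC t * at_risk_coeff K a b t thT)"
  unfolding stationary_def
proof (intro ball_cong refl conj_cong)
  fix t assume "t \<in> {1..K-1}"
  then have t: "1 \<le> t" "t < K" "t \<le> K" by auto
  show "((\<lambda>x. lossF K a b t (thT(t := x)) thC) has_real_derivative 0) (at (thT t))
      \<longleftrightarrow> dsurv K thT t * lossF_event_coeff K a b t thC = dcdf K thT t * at_risk_coeff K a b t thC"
    unfolding lossF_eq_quadratic[OF assms t(3)] by (rule quadratic_in_dcdf_deriv_zero_iff[OF t(1,2)])
  show "((\<lambda>x. lossG K a b t thT (thC(t := x))) has_real_derivative 0) (at (thC t))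
      \<longleftrightarrow> dsurv K thC t * lossG_event_coeff K a b t thT = dcdf K thC t * at_risk_coeff K a b t thT"
    unfolding lossG_eq_quadratic[OF assms t(3)] by (rule quadratic_in_dcdf_deriv_zero_iff[OF t(1,2)])
qed

lemma lossF_event_coeff_eq_dcdf:
  assumes "valid_param K b" "t \<le> K" "\<forall>s<t. dcdf K thC s = dcdf K b s"
  shows "lossF_event_coeff K a b t thC = dcdf K a t"
  unfolding lossF_event_coeff_def dcdf_def
proof (intro sum.cong refl)
  fix u assume "u \<in> {1..t}"
  then have u: "1 \<le> u" "u - 1 < t" by auto
  then have "dsurv_minus K thC u = dsurv_minus K b u"
    using u assms(3) by (simp add: dsurv_minus_def)
  moreover have "0 < dsurv_minus K b u"
    using u assms by (intro dsurv_minus_pos) auto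
  ultimately show "dpmf K a u * dsurv_minus K b u / dsurv_minus K thC u = dpmf K a u"
    by simp
qed

lemma lossG_event_coeff_eq:
  assumes "valid_param K a" "1 \<le> t" "t < K" "\<forall>s<t. dcdf K thT s = dcdf K a s"
  shows "lossG_event_coeff K a b t thT = dcdf K b (t - 1) + dpmf K b t * dsurv K a t / dsurv K thT t"
proof -
  obtain m where m: "t = Suc m" using assms(2) by (cases t) auto
  have "(\<Sum>u=1..m. dpmf K b u * dsurv K a u / dsurv K thT u) = dcdf K b m"
    unfolding dcdf_def
  proof (intro sum.cong refl)
    fix u assume u: "u \<in> {1..m}"
    then have "dsurv K thT u = dsurv K a u"
      using assms(4) m by (simp add: dsurv_def)
    moreover have "0 < dsurv K a u"
      using u assms m by (intro dsurv_pos) auto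
    ultimately show "dpmf K b u * dsurv K a u / dsurv K thT u = dpmf K b u"
      by simp
  qed
  then show ?thesis
    unfolding lossG_event_coeff_def m by simp
qed

lemma stationary_at_truth:
  assumes "1 \<le> K" "valid_param K a" "valid_param K b"
  shows "stationary K a b a b"
  unfolding stationary_iff[OF assms(1)]
proof
  fix t assume "t \<in> {1..K-1}"
  then have t: "1 \<le> t" "t < K" by auto
  have "lossF_event_coeff K a b t b = dcdf K a t"
    using assms t by (intro lossF_event_coeff_eq_dcdf) auto
  moreover have "lossG_event_coeff K a b t a = dcdf K b t"
    using lossG_event_coeff_eq[OF assms(2) t] dsurv_pos[OF assms(2) t(2)]
      dcdf_eq_dcdf_pred_plus_dpmf[OF t(1)] by simp
  moreover have "at_risk_coeff K a b t b = dsurv K a t" "at_risk_coeff K a b t a = dsurv K b t"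
    using dsurv_pos[OF assms(2) t(2)] dsurv_pos[OF assms(3) t(2)] by (simp_all add: at_risk_coeff_def)
  ultimately show "dsurv K a t * lossF_event_coeff K a b t b = dcdf K a t * at_risk_coeff K a b t b
    \<and> dsurv K b t * lossG_event_coeff K a b t a = dcdf K b t * at_risk_coeff K a b t a"
    by simp
qed

lemma quadratic_pos_root_unique:
  fixes a b d y z :: real
  assumes "0 \<le> a" "0 < d" "0 < y" "0 < z"
    and "a * y^2 + b * y = d" "a * z^2 + b * z = d"
  shows "y = z"
proof (rule ccontr)
  assume "y \<noteq> z"
  have "(y - z) * (a * (y + z) + b) = 0"
    using assms(5,6) by (simp add: algebra_simps power2_eq_square)
  with \<open>y \<noteq> z\<close> have "b = - a * (y + z)"
    by simp
  with assms(5) have "d = - (a * y * z)"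
    by (simp add: algebra_simps power2_eq_square)
  moreover have "0 \<le> a * y * z"
    using assms(1,3,4) by simp
  ultimately show False
    using assms(2) by linarith
qed

lemma stationary_equations_unique_solution:
  fixes x y f g \<gamma> c :: real
  assumes pos: "0 < x" "0 < y" "0 < f" "f \<le> 1" "0 < g" "0 \<le> c"
    and sum: "\<gamma> + c + g = 1"
    and eqF: "x * (1 - f) = (1 - x) * (f * g / y)"
    and eqG: "y * (\<gamma> + c * f / x) = (1 - y) * (f * g / x)"
  shows "x = f \<and> y = g"
proof -
  define D where "D = (1 - f) * y + f * g"
  have xD: "x * D = f * g"
    using eqF pos(2) unfolding D_def by (simp add: field_simps)
  have eqG': "y * (\<gamma> * x + c * f) = (1 - y) * f * g"
    using eqG pos(1) by (simp add: field_simps)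
  have "f * (y * (\<gamma> * g + c * D)) = y * (\<gamma> * (x * D) + c * f * D)"
    unfolding xD by (simp add: algebra_simps)
  also have "\<dots> = D * (y * (\<gamma> * x + c * f))"
    by (simp add: algebra_simps)
  also have "\<dots> = f * ((1 - y) * g * D)"
    unfolding eqG' by (simp add: algebra_simps)
  finally have "y * (\<gamma> * g + c * D) = (1 - y) * g * D"
    using pos(3) by simp
  then have root_y: "(c + g) * (1 - f) * y^2 + (\<gamma> * g + (c + g) * f * g - (1 - f) * g) * y = f * g^2"
    unfolding D_def by (simp add: algebra_simps power2_eq_square)
  have root_g: "(c + g) * (1 - f) * g^2 + (\<gamma> * g + (c + g) * f * g - (1 - f) * g) * g = f * g^2"
  proof -
    have "(c + g) * (1 - f) * g^2 + (\<gamma> * g + (c + g) * f * g - (1 - f) * g) * g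
        = f * g^2 + (\<gamma> + c + g - 1) * g^2"
      by (simp add: algebra_simps power2_eq_square)
    also have "\<dots> = f * g^2"
      using sum by simp
    finally show ?thesis .
  qed
  have "y = g"
    using pos by (intro quadratic_pos_root_unique[OF _ _ _ _ root_y root_g]) auto
  with xD pos(5) have "x = f"
    unfolding D_def by (simp add: algebra_simps)
  with \<open>y = g\<close> show ?thesis by blast
qed

lemma stationary_dcdf_step:
  assumes t: "1 \<le> t" "t < K"
    and valid: "valid_param K a" "valid_param K b" "valid_param K thT" "valid_param K thC"
    and agree: "\<forall>s<t. dcdf K thT s = dcdf K a s \<and> dcdf K thC s = dcdf K b s"
    and eqF: "dsurv K thT t * lossF_event_coeff K a b t thC = dcdf K thT t * at_risk_coeff K a b t thC"
    and eqG: "dsurv K thC t * lossG_event_coeff K a b t thT = dcdf K thC t * at_risk_coeff K a b t thT"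
  shows "dcdf K thT t = dcdf K a t \<and> dcdf K thC t = dcdf K b t"
proof -
  have "lossF_event_coeff K a b t thC = 1 - dsurv K a t"
    using lossF_event_coeff_eq_dcdf[of K b t thC a] valid agree t by (simp add: dsurv_def)
  moreover have "lossG_event_coeff K a b t thT
      = dcdf K b (t - 1) + dpmf K b t * dsurv K a t / dsurv K thT t"
    using lossG_event_coeff_eq[OF valid(1) t] agree by simp
  moreover have "dcdf K b (t - 1) + dpmf K b t + dsurv K b t = 1"
    using dcdf_eq_dcdf_pred_plus_dpmf[OF t(1)] by (simp add: dsurv_def)
  moreover have "0 \<le> dcdf K a t"
    using valid(1) t by (simp add: dcdf_nonneg)
  ultimately have "dsurv K thT t = dsurv K a t \<and> dsurv K thC t = dsurv K b t"
    using eqF eqG valid t dsurv_pos[of K _ t]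
    by (intro stationary_equations_unique_solution[where \<gamma>="dcdf K b (t - 1)" and c="dpmf K b t"])
      (auto simp: at_risk_coeff_def dsurv_def valid_param_def less_imp_le)
  then show ?thesis
    by (simp add: dsurv_def)
qed

lemma stationary_imp_dcdf_eq:
  assumes "1 \<le> K" "valid_param K a" "valid_param K b" "valid_param K thT" "valid_param K thC"
    and "stationary K a b thT thC" "t < K"
  shows "dcdf K thT t = dcdf K a t \<and> dcdf K thC t = dcdf K b t"
  using \<open>t < K\<close>
proof (induction t rule: less_induct)
  case (less t)
  show ?case
  proof (cases "t = 0")
    case True
    then show ?thesis by (simp add: dcdf_def)
  next
    case False
    with less.prems have t: "1 \<le> t" "t < K" by auto
    have "\<forall>s<t. dcdf K thT s = dcdf K a s \<and> dcdf K thC s = dcdf K b s"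
      using less.IH t by simp
    with assms t show ?thesis
      by (intro stationary_dcdf_step) (auto simp: stationary_iff)
  qed
qed

theorem proposition2:
  fixes K :: nat and thsT thsC :: "nat \<Rightarrow> real"
  assumes "K \<ge> 1"
    and "\<forall>t\<in>{1..K}. dpmf K thsT t > 0"
    and "\<forall>t\<in>{1..K}. dpmf K thsC t > 0"
  shows "stationary K thsT thsC thsT thsC
       \<and> (\<forall>thT thC. valid_param K thT \<and> valid_param K thC \<and> stationary K thsT thsC thT thC
            \<longrightarrow> (\<forall>t\<in>{1..K-1}. thT t = thsT t \<and> thC t = thsC t))"
proof
  have valid: "valid_param K thsT" "valid_param K thsC"
    using assms(2,3) by (simp_all add: valid_param_def)
  show "stationary K thsT thsC thsT thsC"
    by (rule stationary_at_truth[OF assms(1) valid])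
  show "\<forall>thT thC. valid_param K thT \<and> valid_param K thC \<and> stationary K thsT thsC thT thC
            \<longrightarrow> (\<forall>t\<in>{1..K-1}. thT t = thsT t \<and> thC t = thsC t)"
  proof (intro allI impI ballI)
    fix thT thC t
    assume model: "valid_param K thT \<and> valid_param K thC \<and> stationary K thsT thsC thT thC"
      and "t \<in> {1..K-1}"
    then have t: "1 \<le> t" "t < K"
      by auto
    have agree: "dcdf K thT s = dcdf K thsT s \<and> dcdf K thC s = dcdf K thsC s" if "s \<le> t" for s
      using assms(1) valid model that t by (intro stationary_imp_dcdf_eq) auto
    show "thT t = thsT t \<and> thC t = thsC t"
      using agree[of t] agree[of "t - 1"] by (auto intro: param_eq_if_dcdf_eq[OF t])
  qed
qed

end
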